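(* Let $n,r$ be positive integers with $r^2\le n+r$. Then $k(n+r)\le k(n)+1$.
   Context: A system on $n$ elements is a triple $(\mathcal{F},w,s)$ where $\mathcal{F}=(F_1,\dots,F_m)$ is a collection of subsets of $[n]$, $w\in[0,1]^m$ with $\sum_i w_i=1$, and $s\in[0,1]^{m\times m\times n}$ with $\sum_p s_{ijp}=1$ for all $i,j$. It is intersecting if $s_{ijp}>0$ implies $p\in F_i\cap F_j$. It is balanced if for all $p\in[n]$, $\sum_{i,j} w_iw_js_{ijp}=1/n$. Its cardinality is the size of the largest set in $\mathcal{F}$. $k(n)$ is the minimum $k$ such that there exists a balanced intersecting system on $n$ elements with cardinality $k$. *)

theory Defs
  imports Main "HOL.Real"
begin

definition is_system :: "nat \<Rightarrow> nat \<Rightarrow> (nat \<Rightarrow> nat set) \<Rightarrow> (nat \<Rightarrow> real)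
    \<Rightarrow> (nat \<Rightarrow> nat \<Rightarrow> nat \<Rightarrow> real) \<Rightarrow> bool" where
  "is_system n m F w s \<longleftrightarrow>
     (\<forall>i\<in>{1..m}. F i \<subseteq> {1..n}) \<and>
     (\<forall>i\<in>{1..m}. 0 \<le> w i \<and> w i \<le> 1) \<and>
     (\<Sum>i=1..m. w i) = 1 \<and>
     (\<forall>i\<in>{1..m}. \<forall>j\<in>{1..m}. \<forall>p\<in>{1..n}. 0 \<le> s i j p \<and> s i j p \<le> 1) \<and>
     (\<forall>i\<in>{1..m}. \<forall>j\<in>{1..m}. (\<Sum>p=1..n. s i j p) = 1)"

definition intersecting :: "nat \<Rightarrow> nat \<Rightarrow> (nat \<Rightarrow> nat set)
    \<Rightarrow> (nat \<Rightarrow> nat \<Rightarrow> nat \<Rightarrow> real) \<Rightarrow> bool" where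
  "intersecting n m F s \<longleftrightarrow>
     (\<forall>i\<in>{1..m}. \<forall>j\<in>{1..m}. \<forall>p\<in>{1..n}. s i j p > 0 \<longrightarrow> p \<in> F i \<inter> F j)"

definition balanced :: "nat \<Rightarrow> nat \<Rightarrow> (nat \<Rightarrow> real)
    \<Rightarrow> (nat \<Rightarrow> nat \<Rightarrow> nat \<Rightarrow> real) \<Rightarrow> bool" where
  "balanced n m w s \<longleftrightarrow>
     (\<forall>p\<in>{1..n}. (\<Sum>i=1..m. \<Sum>j=1..m. w i * w j * s i j p) = 1 / real n)"

definition cardinality :: "nat \<Rightarrow> (nat \<Rightarrow> nat set) \<Rightarrow> nat" where
  "cardinality m F = Max ((\<lambda>i. card (F i)) ` {1..m})"

definition kfun :: "nat \<Rightarrow> nat" where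
  "kfun n = (LEAST k. \<exists>m F w s. is_system n m F w s \<and> intersecting n m F s \<and>
                          balanced n m w s \<and> cardinality m F = k)"

end

theory Submission
  imports Defs
begin

(* Start from an optimal system on {1..n} and replace each set F i by the r sets
   F i \<union> {n + t}, t = 1..r, each with weight w i / r. Copies with different t keep the
   distribution s i j; copies with the same t move the fraction \<alpha> = r^2 / (n + r) of their
   mass to the common new point n + t. A new point then receives total mass \<alpha> / r^2 = 1 / (n + r),
   an old point (1 - \<alpha> / r) / n = 1 / (n + r), and r^2 \<le> n + r says exactly that \<alpha> \<le> 1. *)

(* The index a \<in> {1..m * r} encodes the pair (block r a, slot r a) \<in> {1..m} \<times> {1..r},
   a = (block r a - 1) * r + slot r a. *)

definition block :: "nat \<Rightarrow> nat \<Rightarrow> nat" where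
  "block r a = (a - 1) div r + 1"

definition slot :: "nat \<Rightarrow> nat \<Rightarrow> nat" where
  "slot r a = (a - 1) mod r + 1"

lemma block_slot_mem:
  assumes "0 < r" and "a \<in> {1..m * r}"
  shows "block r a \<in> {1..m}" and "slot r a \<in> {1..r}"
proof -
  have "a - 1 < m * r"
    using assms(2) by auto
  then have "(a - 1) div r < m"
    by (rule less_mult_imp_div_less)
  moreover have "(a - 1) mod r < r"
    using assms(1) by (rule mod_less_divisor)
  ultimately show "block r a \<in> {1..m}" and "slot r a \<in> {1..r}"
    unfolding block_def slot_def by auto
qed

lemma block_slot_of_index:
  assumes "i \<ge> 1" and "t \<in> {1..r}"
  shows "block r ((i - 1) * r + t) = i" and "slot r ((i - 1) * r + t) = t"
proof -
  obtain k l where "i = Suc k" "t = Suc l" "l < r"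
    using assms by (cases i; cases t) auto
  then show "block r ((i - 1) * r + t) = i" and "slot r ((i - 1) * r + t) = t"
    by (simp_all add: block_def slot_def)
qed

lemma bij_betw_block_slot:
  assumes "0 < r"
  shows "bij_betw (\<lambda>a. (block r a, slot r a)) {1..m * r} ({1..m} \<times> {1..r})"
proof (rule bij_betw_byWitness[where f' = "\<lambda>(i, t). (i - 1) * r + t"])
  show "\<forall>a\<in>{1..m * r}. (\<lambda>(i, t). (i - 1) * r + t) (block r a, slot r a) = a"
    using assms by (auto simp: block_def slot_def)
  show "\<forall>x\<in>{1..m} \<times> {1..r}. (\<lambda>a. (block r a, slot r a)) ((\<lambda>(i, t). (i - 1) * r + t) x) = x"
    using block_slot_of_index by fastforce
  show "(\<lambda>a. (block r a, slot r a)) ` {1..m * r} \<subseteq> {1..m} \<times> {1..r}"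
    using block_slot_mem[OF assms] by blast
  show "(\<lambda>(i, t). (i - 1) * r + t) ` ({1..m} \<times> {1..r}) \<subseteq> {1..m * r}"
  proof (clarify)
    fix i t assume "i \<in> {1..m}" "t \<in> {1..r}"
    then have "(i - 1) * r + t \<le> i * r"
      by (cases i) auto
    also have "\<dots> \<le> m * r"
      using \<open>i \<in> {1..m}\<close> by simp
    finally show "(i - 1) * r + t \<in> {1..m * r}"
      using \<open>t \<in> {1..r}\<close> by auto
  qed
qed

lemma sum_block_slot:
  assumes "0 < r" and "\<And>a. a \<in> {1..m * r} \<Longrightarrow> f a = g (block r a) (slot r a)"
  shows "(\<Sum>a=1..m * r. f a) = (\<Sum>i=1..m. \<Sum>t=1..r. g i t)"
proof -
  have "(\<Sum>a=1..m * r. f a) = (\<Sum>a=1..m * r. g (block r a) (slot r a))"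
    using assms(2) by (rule sum.cong[OF refl])
  also have "\<dots> = (\<Sum>(i, t)\<in>{1..m} \<times> {1..r}. g i t)"
    using sum.reindex_bij_betw[OF bij_betw_block_slot[OF assms(1)], of "\<lambda>(i, t). g i t"] by simp
  finally show ?thesis
    by (simp add: sum.cartesian_product)
qed

lemma block_image:
  assumes "0 < r"
  shows "block r ` {1..m * r} = {1..m}"
proof -
  have "block r ` {1..m * r} = fst ` ((\<lambda>a. (block r a, slot r a)) ` {1..m * r})"
    by (simp add: image_image)
  also have "\<dots> = {1..m}"
    using bij_betw_imp_surj_on[OF bij_betw_block_slot[OF assms]] assms by simp
  finally show ?thesis .
qed

(* Outside {1..n} the value s i j p is unconstrained, hence the factor of_bool (p \<le> n). *)
definition ext_pair_dist ::
    "nat \<Rightarrow> real \<Rightarrow> (nat \<Rightarrow> nat \<Rightarrow> nat \<Rightarrow> real) \<Rightarrow> nat \<Rightarrow> nat \<Rightarrow> nat \<Rightarrow> nat \<Rightarrow> nat \<Rightarrow> real" where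
  "ext_pair_dist n \<alpha> s i t j u p =
     (if t = u then (1 - \<alpha>) * (of_bool (p \<le> n) * s i j p) + \<alpha> * of_bool (p = n + t)
      else of_bool (p \<le> n) * s i j p)"

lemma ext_pair_dist_bounds:
  assumes "p \<le> n \<Longrightarrow> 0 \<le> s i j p \<and> s i j p \<le> 1" and "0 \<le> \<alpha>" and "\<alpha> \<le> 1"
  shows "0 \<le> ext_pair_dist n \<alpha> s i t j u p" and "ext_pair_dist n \<alpha> s i t j u p \<le> 1"
proof -
  define q where "q = of_bool (p \<le> n) * s i j p"
  define e :: real where "e = of_bool (p = n + t)"
  have q: "0 \<le> q" "q \<le> 1" and e: "0 \<le> e" "e \<le> 1"
    using assms(1) by (auto simp: q_def e_def)
  have "(1 - \<alpha>) * q + \<alpha> * e \<le> 1"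
    using q e assms(2,3) by (intro convex_bound_le) auto
  moreover have "0 \<le> (1 - \<alpha>) * q + \<alpha> * e"
    using q e assms(2,3) by simp
  ultimately show "0 \<le> ext_pair_dist n \<alpha> s i t j u p" and "ext_pair_dist n \<alpha> s i t j u p \<le> 1"
    using q unfolding ext_pair_dist_def q_def e_def by auto
qed

lemma sum_of_bool_le_prefix:
  fixes f :: "nat \<Rightarrow> 'a::comm_semiring_1"
  shows "(\<Sum>p=1..n + r. of_bool (p \<le> n) * f p) = (\<Sum>p=1..n. f p)"
proof -
  have "{1..n + r} \<inter> {p. p \<le> n} = {1..n}"
    by auto
  then show ?thesis
    by simp
qed

lemma sum_ext_pair_dist:
  assumes "(\<Sum>p=1..n. s i j p) = 1" and "t \<in> {1..r}"
  shows "(\<Sum>p=1..n + r. ext_pair_dist n \<alpha> s i t j u p) = 1"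
proof -
  have "{1..n + r} \<inter> {p. p = n + t} = {n + t}"
    using assms(2) by auto
  then have slot_mass: "(\<Sum>p=1..n + r. of_bool (p = n + t)) = (1::real)"
    by simp
  have base_mass: "(\<Sum>p=1..n + r. of_bool (p \<le> n) * s i j p) = 1"
    using assms(1) by (simp only: sum_of_bool_le_prefix)
  show ?thesis
  proof (cases "t = u")
    case True
    then have "(\<Sum>p=1..n + r. ext_pair_dist n \<alpha> s i t j u p)
        = (1 - \<alpha>) * (\<Sum>p=1..n + r. of_bool (p \<le> n) * s i j p) + \<alpha> * (\<Sum>p=1..n + r. of_bool (p = n + t))"
      unfolding ext_pair_dist_def by (simp only: if_True simp_thms sum.distrib sum_distrib_left)
    then show ?thesis
      unfolding slot_mass base_mass by simp
  next
    case False
    then show ?thesis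
      unfolding ext_pair_dist_def using base_mass by simp
  qed
qed

lemma sum_sum_ext_pair_dist:
  assumes "p \<le> n + r"
  shows "(\<Sum>t=1..r. \<Sum>u=1..r. ext_pair_dist n \<alpha> s i t j u p)
    = (real r ^ 2 - real r * \<alpha>) * (of_bool (p \<le> n) * s i j p) + \<alpha> * of_bool (n < p)"
proof -
  define q where "q = of_bool (p \<le> n) * s i j p"
  have "ext_pair_dist n \<alpha> s i t j u p = q + of_bool (u = t) * (\<alpha> * of_bool (p = n + t) - \<alpha> * q)" for t u
    unfolding ext_pair_dist_def q_def by (simp add: algebra_simps)
  then have "(\<Sum>u=1..r. ext_pair_dist n \<alpha> s i t j u p) = real r * q + (\<alpha> * of_bool (p = n + t) - \<alpha> * q)"
    if "t \<in> {1..r}" for t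
    using that by (simp add: sum.distrib)
  then have "(\<Sum>t=1..r. \<Sum>u=1..r. ext_pair_dist n \<alpha> s i t j u p)
      = (\<Sum>t=1..r. real r * q + (\<alpha> * of_bool (p = n + t) - \<alpha> * q))"
    by (rule sum.cong[OF refl])
  also have "\<dots> = real r * real r * q + \<alpha> * (\<Sum>t=1..r. of_bool (p = n + t)) - real r * \<alpha> * q"
    by (simp add: sum.distrib sum_subtractf sum_distrib_left)
  also have "(\<Sum>t=1..r. of_bool (p = n + t)) = (of_bool (n < p) :: real)"
  proof -
    have "{1..r} \<inter> {t. p = n + t} = (if n < p then {p - n} else {})"
      using assms by auto
    then show ?thesis
      by simp
  qed
  finally show ?thesis
    unfolding q_def by (simp add: power2_eq_square algebra_simps)
qed

lemma ext_pair_dist_pos_cases: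
  assumes "0 < ext_pair_dist n \<alpha> s i t j u p" and "\<alpha> \<le> 1"
  shows "(p \<le> n \<and> 0 < s i j p) \<or> (t = u \<and> p = n + t)"
proof (rule disjCI)
  assume off_slot: "\<not> (t = u \<and> p = n + t)"
  define q where "q = of_bool (p \<le> n) * s i j p"
  have "ext_pair_dist n \<alpha> s i t j u p = (if t = u then 1 - \<alpha> else 1) * q"
    using off_slot unfolding ext_pair_dist_def q_def by auto
  then have "0 < q"
    using assms by (auto simp: zero_less_mult_iff split: if_splits)
  then show "p \<le> n \<and> 0 < s i j p"
    unfolding q_def by (cases "p \<le> n") auto
qed

definition ext_sets :: "nat \<Rightarrow> nat \<Rightarrow> (nat \<Rightarrow> nat set) \<Rightarrow> nat \<Rightarrow> nat set" where
  "ext_sets n r F a = insert (n + slot r a) (F (block r a))"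

definition ext_weights :: "nat \<Rightarrow> (nat \<Rightarrow> real) \<Rightarrow> nat \<Rightarrow> real" where
  "ext_weights r w a = w (block r a) / real r"

definition ext_dist ::
    "nat \<Rightarrow> nat \<Rightarrow> real \<Rightarrow> (nat \<Rightarrow> nat \<Rightarrow> nat \<Rightarrow> real) \<Rightarrow> nat \<Rightarrow> nat \<Rightarrow> nat \<Rightarrow> real" where
  "ext_dist n r \<alpha> s a b = ext_pair_dist n \<alpha> s (block r a) (slot r a) (block r b) (slot r b)"

lemma is_system_ext:
  assumes "is_system n m F w s" and "0 < r" and "0 \<le> \<alpha>" and "\<alpha> \<le> 1"
  shows "is_system (n + r) (m * r) (ext_sets n r F) (ext_weights r w) (ext_dist n r \<alpha> s)"
  unfolding is_system_def
proof (intro conjI ballI)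
  fix a b p assume a: "a \<in> {1..m * r}" and b: "b \<in> {1..m * r}"
  note mem = block_slot_mem[OF \<open>0 < r\<close>]
  have "F (block r a) \<subseteq> {1..n}"
    using assms(1) mem[OF a] unfolding is_system_def by blast
  then show "ext_sets n r F a \<subseteq> {1..n + r}"
    using mem[OF a] unfolding ext_sets_def by auto
  show "0 \<le> ext_weights r w a" and "ext_weights r w a \<le> 1"
    using assms(1,2) mem[OF a] unfolding is_system_def ext_weights_def
    by (auto simp: divide_le_eq_1 intro: order_trans[of _ 1])
  show "(\<Sum>p=1..n + r. ext_dist n r \<alpha> s a b p) = 1"
    using assms(1) mem[OF a] mem[OF b] unfolding is_system_def ext_dist_def
    by (intro sum_ext_pair_dist) auto
  assume "p \<in> {1..n + r}"
  show "0 \<le> ext_dist n r \<alpha> s a b p" and "ext_dist n r \<alpha> s a b p \<le> 1"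
    using assms mem[OF a] mem[OF b] \<open>p \<in> {1..n + r}\<close> unfolding is_system_def ext_dist_def
    by (intro ext_pair_dist_bounds; auto)+
next
  have "(\<Sum>a=1..m * r. ext_weights r w a) = (\<Sum>i=1..m. \<Sum>t=1..r. w i / real r)"
    using \<open>0 < r\<close> by (rule sum_block_slot) (simp add: ext_weights_def)
  also have "\<dots> = 1"
    using assms(1,2) unfolding is_system_def by simp
  finally show "(\<Sum>a=1..m * r. ext_weights r w a) = 1" .
qed

lemma intersecting_ext:
  assumes "intersecting n m F s" and "0 < r" and "\<alpha> \<le> 1"
  shows "intersecting (n + r) (m * r) (ext_sets n r F) (ext_dist n r \<alpha> s)"
  unfolding intersecting_def
proof (intro ballI impI)
  fix a b p assume a: "a \<in> {1..m * r}" and b: "b \<in> {1..m * r}" and p: "p \<in> {1..n + r}"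
    and "0 < ext_dist n r \<alpha> s a b p"
  then consider "p \<le> n" "0 < s (block r a) (block r b) p"
    | "slot r a = slot r b" "p = n + slot r a"
    using ext_pair_dist_pos_cases[OF _ \<open>\<alpha> \<le> 1\<close>] unfolding ext_dist_def by blast
  then show "p \<in> ext_sets n r F a \<inter> ext_sets n r F b"
  proof cases
    case 1
    moreover have "block r a \<in> {1..m}" and "block r b \<in> {1..m}"
      using block_slot_mem[OF \<open>0 < r\<close>] a b by auto
    moreover have "p \<in> {1..n}"
      using 1 p by simp
    ultimately have "p \<in> F (block r a) \<inter> F (block r b)"
      using assms(1) unfolding intersecting_def by blast
    then show ?thesis
      by (auto simp: ext_sets_def)
  next
    case 2
    then show ?thesis
      by (simp add: ext_sets_def)
  qed
qed

lemma cardinality_ext: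
  assumes "\<forall>i\<in>{1..m}. F i \<subseteq> {1..n}" and "0 < m" and "0 < r"
  shows "cardinality (m * r) (ext_sets n r F) = cardinality m F + 1"
proof -
  have "card (ext_sets n r F a) = card (F (block r a)) + 1" if "a \<in> {1..m * r}" for a
  proof -
    have "F (block r a) \<subseteq> {1..n}"
      using assms(1) block_slot_mem[OF \<open>0 < r\<close> that] by blast
    then have "finite (F (block r a))" and "n + slot r a \<notin> F (block r a)"
      using block_slot_mem[OF \<open>0 < r\<close> that] by (auto intro: finite_subset)
    then show ?thesis
      by (simp add: ext_sets_def)
  qed
  then have "(\<lambda>a. card (ext_sets n r F a)) ` {1..m * r} = (\<lambda>i. card (F i) + 1) ` block r ` {1..m * r}"
    by (simp add: image_image)
  also have "\<dots> = (\<lambda>i. card (F i) + 1) ` {1..m}"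
    by (simp only: block_image[OF \<open>0 < r\<close>])
  finally show ?thesis
    unfolding cardinality_def by (simp only:) (rule Max_add_commute, use assms(2) in auto)
qed

lemma balanced_ext:
  assumes "balanced n m w s" and "(\<Sum>i=1..m. w i) = 1" and "0 < n" and "0 < r"
  shows "balanced (n + r) (m * r) (ext_weights r w) (ext_dist n r (real r ^ 2 / real (n + r)) s)"
  unfolding balanced_def
proof
  fix p assume p: "p \<in> {1..n + r}"
  define \<alpha> where "\<alpha> = real r ^ 2 / real (n + r)"
  define q where "q i j = of_bool (p \<le> n) * s i j p" for i j
  define c where "c i j = w i / real r * (w j / real r)" for i j
  have "(\<Sum>a=1..m * r. \<Sum>b=1..m * r. ext_weights r w a * ext_weights r w b * ext_dist n r \<alpha> s a b p)
      = (\<Sum>i=1..m. \<Sum>t=1..r. \<Sum>j=1..m. \<Sum>u=1..r. c i j * ext_pair_dist n \<alpha> s i t j u p)"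
    using \<open>0 < r\<close>
  proof (rule sum_block_slot)
    fix a
    show "(\<Sum>b=1..m * r. ext_weights r w a * ext_weights r w b * ext_dist n r \<alpha> s a b p)
        = (\<Sum>j=1..m. \<Sum>u=1..r. c (block r a) j * ext_pair_dist n \<alpha> s (block r a) (slot r a) j u p)"
      using \<open>0 < r\<close> by (rule sum_block_slot) (simp add: ext_weights_def ext_dist_def c_def)
  qed
  also have "\<dots> = (\<Sum>i=1..m. \<Sum>j=1..m. c i j * (\<Sum>t=1..r. \<Sum>u=1..r. ext_pair_dist n \<alpha> s i t j u p))"
    unfolding sum_distrib_left by (rule sum.cong[OF refl], rule sum.swap)
  also have "\<dots> = (\<Sum>i=1..m. \<Sum>j=1..m. c i j * ((real r ^ 2 - real r * \<alpha>) * q i j + \<alpha> * of_bool (n < p)))"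
    using p by (simp only: sum_sum_ext_pair_dist q_def atLeastAtMost_iff)
  also have "\<dots> = (1 - \<alpha> / real r) * (\<Sum>i=1..m. \<Sum>j=1..m. w i * w j * q i j)
      + \<alpha> / real r ^ 2 * of_bool (n < p) * (\<Sum>i=1..m. \<Sum>j=1..m. w i * w j)"
  proof -
    have "c i j * ((real r ^ 2 - real r * \<alpha>) * q i j + \<alpha> * of_bool (n < p))
        = (1 - \<alpha> / real r) * (w i * w j * q i j) + \<alpha> / real r ^ 2 * of_bool (n < p) * (w i * w j)" for i j
      using \<open>0 < r\<close> by (simp add: c_def field_simps power2_eq_square)
    then show ?thesis
      by (simp only: sum.distrib flip: sum_distrib_left)
  qed
  also have "\<dots> = (1 - \<alpha> / real r) * (\<Sum>i=1..m. \<Sum>j=1..m. w i * w j * q i j)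
      + \<alpha> / real r ^ 2 * of_bool (n < p)"
  proof -
    have "(\<Sum>i=1..m. \<Sum>j=1..m. w i * w j) = 1"
      using assms(2) by (simp flip: sum_product)
    then show ?thesis
      by simp
  qed
  also have "\<dots> = 1 / real (n + r)"
  proof (cases "p \<le> n")
    case True
    have "\<alpha> / real r = real r / real (n + r)"
      by (simp add: \<alpha>_def power2_eq_square)
    then have factor: "(1 - \<alpha> / real r) * (1 / real n) = 1 / real (n + r)"
      using assms(3) by (simp add: field_simps)
    have "(\<Sum>i=1..m. \<Sum>j=1..m. w i * w j * q i j) = 1 / real n"
      using assms(1) p True unfolding balanced_def q_def by simp
    with True factor show ?thesis
      by simp
  next
    case False
    have "\<alpha> / real r ^ 2 = 1 / real (n + r)"
      using assms(4) by (simp add: \<alpha>_def)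
    with False show ?thesis
      by (simp add: q_def)
  qed
  finally show "(\<Sum>a=1..m * r. \<Sum>b=1..m * r.
      ext_weights r w a * ext_weights r w b * ext_dist n r (real r ^ 2 / real (n + r)) s a b p)
      = 1 / real (n + r)"
    unfolding \<alpha>_def .
qed

lemma kfun_le:
  assumes "is_system n m F w s" and "intersecting n m F s" and "balanced n m w s"
  shows "kfun n \<le> cardinality m F"
  unfolding kfun_def using assms by (intro Least_le) blast

lemma kfun_attained:
  assumes "0 < n"
  obtains m F w s where "is_system n m F w s" and "intersecting n m F s" and "balanced n m w s"
    and "cardinality m F = kfun n"
proof -
  let ?attained = "\<lambda>k. \<exists>m F w s. is_system n m F w s \<and> intersecting n m F s \<and> balanced n m w s
    \<and> cardinality m F = k"
  have "is_system n 1 (\<lambda>_. {1..n}) (\<lambda>_. 1) (\<lambda>_ _ _. 1 / real n)"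
    and "intersecting n 1 (\<lambda>_. {1..n}) (\<lambda>_ _ _. 1 / real n)"
    and "balanced n 1 (\<lambda>_. 1) (\<lambda>_ _ _. 1 / real n)"
    using assms by (auto simp: is_system_def intersecting_def balanced_def)
  then have "?attained (cardinality 1 (\<lambda>_. {1..n}))"
    by blast
  then have "?attained (kfun n)"
    unfolding kfun_def by (rule LeastI)
  then show ?thesis
    using that by blast
qed

theorem lemma3:
  fixes n r :: nat
  assumes "0 < n" and "0 < r" and "r ^ 2 \<le> n + r"
  shows "kfun (n + r) \<le> kfun n + 1"
proof -
  obtain m F w s where sys: "is_system n m F w s" and int: "intersecting n m F s"
    and bal: "balanced n m w s" and opt: "cardinality m F = kfun n"
    using kfun_attained[OF \<open>0 < n\<close>] .
  have sets: "\<forall>i\<in>{1..m}. F i \<subseteq> {1..n}" and weights: "(\<Sum>i=1..m. w i) = 1"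
    using sys unfolding is_system_def by blast+
  have "0 < m"
    using weights by (intro gr0I) simp
  define \<alpha> where "\<alpha> = real r ^ 2 / real (n + r)"
  have "0 \<le> \<alpha>" and "\<alpha> \<le> 1"
    using assms(2,3) by (simp_all add: \<alpha>_def divide_le_eq_1 flip: of_nat_power of_nat_add)
  have "kfun (n + r) \<le> cardinality (m * r) (ext_sets n r F)"
    using is_system_ext[OF sys \<open>0 < r\<close> \<open>0 \<le> \<alpha>\<close> \<open>\<alpha> \<le> 1\<close>]
      intersecting_ext[OF int \<open>0 < r\<close> \<open>\<alpha> \<le> 1\<close>]
      balanced_ext[OF bal weights \<open>0 < n\<close> \<open>0 < r\<close>, folded \<alpha>_def]
    by (rule kfun_le)
  also have "\<dots> = kfun n + 1"
    using cardinality_ext[OF sets \<open>0 < m\<close> \<open>0 < r\<close>] opt by simp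
  finally show ?thesis .
qed

end
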